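(* Let $d\ge1$, $x_1<x_2$, $x_0\in[x_1,x_2]$, let $p,r_1,\dots,r_d$ be functions on $[x_1,x_2]$ and $u_0$ a nonvanishing function on $[x_1,x_2]$ such that $M_0=\sup_{[x_1,x_2]}\frac{1}{|pu_0^2|}$ and $M_i=\sup_{[x_1,x_2]}|r_iu_0^2|$ ($i=1,\dots,d$) are finite. Then for every admissible $\mathbf j\in\mathbb Z_{\ge0}^d$ and every $x\in[x_1,x_2]$, $$|\tilde X^{(\mathbf j)}(x)|\le\tilde c_{\mathbf j}\,M_0^{\left[\frac{|\mathbf j|}{2}\right]}M_1^{\left[\frac{j_1+1}{2}\right]}M_2^{\left[\frac{j_2+1}{2}\right]}\cdots M_d^{\left[\frac{j_d+1}{2}\right]}\,|x-x_0|^{|\mathbf j|}.$$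
   Context: $[a]$ denotes the greatest integer not exceeding $a$. Notation: $\int f$ denotes $x\mapsto\int_{x_0}^x f(s)\,ds$; $|\mathbf j|=j_1+\cdots+j_d$; $\delta_i$ the $i$-th standard basis vector. A multiindex $\mathbf j\in\mathbb Z^d$ is admissible if at most one entry is odd. Formal powers: $\tilde X^{(\mathbf 0)}\equiv1$; $\tilde X^{(\mathbf j)}\equiv0$ if some $j_i<0$; for admissible $\mathbf j\ge0$, $\mathbf j\ne\mathbf 0$: if $|\mathbf j|$ is odd and $j_i$ is its odd entry, $\tilde X^{(\mathbf j)}=|\mathbf j|\int r_iu_0^2\tilde X^{(\mathbf j-\delta_i)}$; if $|\mathbf j|$ is even, $\tilde X^{(\mathbf j)}=|\mathbf j|\int\frac{1}{pu_0^2}\sum_{i=1}^d\tilde X^{(\mathbf j-\delta_i)}$. The integers $\tilde c_{\mathbf j}$ are defined by $\tilde c_{\mathbf 0}=1$, $\tilde c_{\mathbf j}=0$ if some $j_i<0$, and for admissible $\mathbf j\ge0$, $\mathbf j\neq\mathbf 0$: $\tilde c_{\mathbf j}=\tilde c_{\mathbf j-\delta_i}$ if $|\mathbf j|$ is odd with odd entry $j_i$, and $\tilde c_{\mathbf j}=\sum_{i=1}^d\tilde c_{\mathbf j-\delta_i}$ if $|\mathbf j|$ is even. *)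

theory Defs
  imports "HOL-Analysis.Analysis"
begin

text \<open>Multi-indices j in Z^d are int lists of length d (entries 0..d-1 stand for 1..d).
  The functions r_1..r_d are r 0 .. r (d-1).\<close>

definition oint :: "real \<Rightarrow> real \<Rightarrow> (real \<Rightarrow> real) \<Rightarrow> real" where
  "oint a b f = (if a \<le> b then integral {a..b} f else - integral {b..a} f)"

definition admissible :: "int list \<Rightarrow> bool" where
  "admissible j \<longleftrightarrow> card {i. i < length j \<and> odd (j ! i)} \<le> 1"

definition odd_entry :: "int list \<Rightarrow> nat" where
  "odd_entry j = (THE i. i < length j \<and> odd (j ! i))"

definition has_neg :: "int list \<Rightarrow> bool" where
  "has_neg j \<longleftrightarrow> (\<exists>i < length j. j ! i < 0)"

definition dec :: "int list \<Rightarrow> nat \<Rightarrow> int list" where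
  "dec j i = j[i := j ! i - 1]"

primrec Xrec :: "(real \<Rightarrow> real) \<Rightarrow> (nat \<Rightarrow> real \<Rightarrow> real) \<Rightarrow> (real \<Rightarrow> real) \<Rightarrow> real
    \<Rightarrow> nat \<Rightarrow> int list \<Rightarrow> real \<Rightarrow> real" where
  "Xrec p r u0 x0 0 j = (\<lambda>x. if j = replicate (length j) 0 then 1 else 0)"
| "Xrec p r u0 x0 (Suc n) j = (\<lambda>x.
     if has_neg j then 0
     else if odd (Suc n) then
       (let i = odd_entry j in
        real (Suc n) * oint x0 x (\<lambda>s. r i s * (u0 s)^2 * Xrec p r u0 x0 n (dec j i) s))
     else real (Suc n) * oint x0 x (\<lambda>s. 1 / (p s * (u0 s)^2) *
              (\<Sum>i<length j. Xrec p r u0 x0 n (dec j i) s)))"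

definition Xtilde :: "(real \<Rightarrow> real) \<Rightarrow> (nat \<Rightarrow> real \<Rightarrow> real) \<Rightarrow> (real \<Rightarrow> real) \<Rightarrow> real
    \<Rightarrow> int list \<Rightarrow> real \<Rightarrow> real" where
  "Xtilde p r u0 x0 j = (if has_neg j then (\<lambda>x. 0) else Xrec p r u0 x0 (nat (sum_list j)) j)"

primrec crec :: "nat \<Rightarrow> int list \<Rightarrow> nat" where
  "crec 0 j = (if j = replicate (length j) 0 then 1 else 0)"
| "crec (Suc n) j =
     (if has_neg j then 0
      else if odd (Suc n) then crec n (dec j (odd_entry j))
      else (\<Sum>i<length j. crec n (dec j i)))"

definition ctilde :: "int list \<Rightarrow> nat" where
  "ctilde j = (if has_neg j then 0 else crec (nat (sum_list j)) j)"

end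

theory Submission
  imports Defs
begin

text \<open>Induction on the total degree n = |j|. An integrand bounded by K |s - x0|^n integrates to at most
  K |x - x0|^(n+1)/(n+1), and the factor n + 1 cancels the denominator. An odd step raises the
  exponent of M_i for the odd coordinate i, an even step raises the exponent of M0 and sums
  over all coordinates, exactly as in the recursion for the integers c_j.\<close>

lemma has_integral_power_from_left:
  fixes a b :: real
  assumes "a \<le> b"
  shows "((\<lambda>s. (s - a) ^ n) has_integral (b - a) ^ Suc n / Suc n) {a..b}"
proof -
  define F where "F s = (s - a) ^ Suc n / Suc n" for s :: real
  have "((\<lambda>s. (s - a) ^ n) has_integral F b - F a) {a..b}"
  proof (rule fundamental_theorem_of_calculus[OF assms])
    fix s assume "s \<in> {a..b}"
    have "(F has_real_derivative real (Suc n) * (s - a) ^ n * 1 / Suc n) (at s within {a..b})"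
      unfolding F_def by (intro derivative_eq_intros) auto
    then show "(F has_vector_derivative (s - a) ^ n) (at s within {a..b})"
      by (simp add: has_real_derivative_iff_has_vector_derivative)
  qed
  then show ?thesis by (simp add: F_def)
qed

lemma has_integral_power_from_right:
  fixes a b :: real
  assumes "a \<le> b"
  shows "((\<lambda>s. (b - s) ^ n) has_integral (b - a) ^ Suc n / Suc n) {a..b}"
  using has_integral_power_from_left[of "-b" "-a" n] assms
  by (subst has_integral_reflect_real[symmetric]) (simp add: add.commute)

lemma abs_integral_le_has_integral:
  fixes f g :: "real \<Rightarrow> real"
  assumes g: "(g has_integral I) S" and le: "\<And>s. s \<in> S \<Longrightarrow> \<bar>f s\<bar> \<le> g s"
  shows "\<bar>integral S f\<bar> \<le> I"
proof (cases "f integrable_on S")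
  case True
  have "norm (integral S f) \<le> integral S g"
    using True g le by (intro integral_norm_bound_integral) (auto simp: has_integral_integrable)
  then show ?thesis using g by (simp add: integral_unique)
next
  case False
  have "0 \<le> I"
    using le by (intro has_integral_nonneg[OF g]) (meson abs_ge_zero order_trans)
  then show ?thesis using False by (simp add: not_integrable_integral)
qed

lemma abs_scaled_oint_le:
  fixes f :: "real \<Rightarrow> real"
  assumes "K \<ge> 0"
    and le: "\<And>s. s \<in> {min x0 x..max x0 x} \<Longrightarrow> \<bar>f s\<bar> \<le> K * \<bar>s - x0\<bar> ^ n"
  shows "\<bar>real (Suc n) * oint x0 x f\<bar> \<le> K * \<bar>x - x0\<bar> ^ Suc n"
proof -
  have "\<bar>oint x0 x f\<bar> \<le> K * (\<bar>x - x0\<bar> ^ Suc n / Suc n)"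
  proof (cases "x0 \<le> x")
    case True
    have "\<bar>integral {x0..x} f\<bar> \<le> K * ((x - x0) ^ Suc n / Suc n)"
      using le True
      by (intro abs_integral_le_has_integral
          [OF has_integral_mult_right[OF has_integral_power_from_left]]) auto
    then show ?thesis using True by (simp add: oint_def)
  next
    case False
    have "\<bar>integral {x..x0} f\<bar> \<le> K * ((x0 - x) ^ Suc n / Suc n)"
      using le False
      by (intro abs_integral_le_has_integral
          [OF has_integral_mult_right[OF has_integral_power_from_right]])
        (auto simp: abs_minus_commute)
    then show ?thesis using False by (simp add: oint_def abs_minus_commute)
  qed
  then show ?thesis
    by (simp add: abs_mult field_simps del: of_nat_Suc)
qed

lemma length_dec [simp]: "length (dec j i) = length j"
  by (simp add: dec_def)

lemma nth_dec: "m < length j \<Longrightarrow> dec j i ! m = (if m = i then j ! i - 1 else j ! m)"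
  by (simp add: dec_def)

lemma sum_list_dec: "i < length j \<Longrightarrow> sum_list (dec j i) = sum_list j - 1"
  unfolding dec_def by (induction j arbitrary: i) (auto split: nat.split)

lemma Xrec_crec_has_neg:
  "has_neg j \<Longrightarrow> Xrec p r u0 x0 n j x = 0 \<and> crec n j = 0"
  by (cases n) (auto simp: has_neg_def, metis nth_replicate less_irrefl)

lemma admissible_odd_unique:
  assumes "admissible j" "k < length j" "odd (j ! k)" "m < length j" "odd (j ! m)"
  shows "m = k"
proof -
  have "card {i. i < length j \<and> odd (j ! i)} \<le> Suc 0"
    using assms(1) by (simp add: admissible_def)
  then show ?thesis
    using assms(2-) by (subst (asm) card_le_Suc0_iff_eq) auto
qed

lemma odd_entry_eq:
  "admissible j \<Longrightarrow> k < length j \<Longrightarrow> odd (j ! k) \<Longrightarrow> odd_entry j = k"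
  unfolding odd_entry_def by (rule the_equality) (auto dest: admissible_odd_unique)

lemma admissible_odd_sum_list_iff:
  assumes "admissible j"
  shows "odd (sum_list j) \<longleftrightarrow> (\<exists>k < length j. odd (j ! k))"
proof
  assume "odd (sum_list j)"
  then show "\<exists>k < length j. odd (j ! k)"
    by (metis (no_types) dvd_sum lessThan_iff sum_list_sum_nth atLeast0LessThan)
next
  assume "\<exists>k < length j. odd (j ! k)"
  then obtain k where k: "k < length j" "odd (j ! k)" by blast
  have "even (\<Sum>i \<in> {..<length j} - {k}. j ! i)"
    using admissible_odd_unique[OF assms k] by (intro dvd_sum) auto
  moreover have "sum_list j = j ! k + (\<Sum>i \<in> {..<length j} - {k}. j ! i)"
    using k(1) by (simp add: sum_list_sum_nth atLeast0LessThan sum.remove)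
  ultimately show "odd (sum_list j)" using k(2) by simp
qed

lemma admissible_dec:
  assumes "\<And>m. m < length j \<Longrightarrow> m \<noteq> i \<Longrightarrow> even (j ! m)"
  shows "admissible (dec j i)"
proof -
  have "m = i" if "m < length j" "odd (dec j i ! m)" for m
    using assms[of m] that by (cases "m = i") (auto simp: nth_dec)
  then have "{m. m < length (dec j i) \<and> odd (dec j i ! m)} \<subseteq> {i}"
    by auto
  then have "card {m. m < length (dec j i) \<and> odd (dec j i ! m)} \<le> card {i}"
    by (intro card_mono) auto
  then show ?thesis by (simp add: admissible_def)
qed

definition index_weight :: "(nat \<Rightarrow> real) \<Rightarrow> int list \<Rightarrow> real" where
  "index_weight M j = (\<Prod>i<length j. M i ^ nat ((j ! i + 1) div 2))"

lemma index_weight_nonneg: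
  "(\<And>i. i < length j \<Longrightarrow> 0 \<le> M i) \<Longrightarrow> 0 \<le> index_weight M j"
  by (auto simp: index_weight_def intro: prod_nonneg)

lemma index_weight_dec_even:
  assumes "even (j ! i)"
  shows "index_weight M (dec j i) = index_weight M j"
  unfolding index_weight_def using assms by (intro prod.cong) (auto simp: nth_dec elim!: evenE)

lemma index_weight_dec_odd:
  assumes k: "k < length j" "odd (j ! k)" "0 \<le> j ! k"
  shows "index_weight M j = M k * index_weight M (dec j k)"
proof -
  have "nat ((j ! k + 1) div 2) = Suc (nat ((dec j k ! k + 1) div 2))"
    using k by (auto simp: nth_dec elim!: oddE)
  moreover have "(\<Prod>i \<in> {..<length j} - {k}. M i ^ nat ((dec j k ! i + 1) div 2))
      = (\<Prod>i \<in> {..<length j} - {k}. M i ^ nat ((j ! i + 1) div 2))"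
    by (intro prod.cong) (auto simp: nth_dec)
  ultimately show ?thesis
    using k(1) by (simp add: index_weight_def prod.remove)
qed

locale formal_power_bounds =
  fixes p u0 :: "real \<Rightarrow> real" and r :: "nat \<Rightarrow> real \<Rightarrow> real" and x0 x1 x2 :: real
    and d :: nat and M0 :: real and M :: "nat \<Rightarrow> real"
  assumes x0_mem: "x0 \<in> {x1..x2}"
    and M0_bound: "\<And>s. s \<in> {x1..x2} \<Longrightarrow> 1 / \<bar>p s * (u0 s)^2\<bar> \<le> M0"
    and M_bound: "\<And>i s. i < d \<Longrightarrow> s \<in> {x1..x2} \<Longrightarrow> \<bar>r i s * (u0 s)^2\<bar> \<le> M i"
begin

abbreviation X :: "nat \<Rightarrow> int list \<Rightarrow> real \<Rightarrow> real" where
  "X \<equiv> Xrec p r u0 x0"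

abbreviation majorant :: "nat \<Rightarrow> int list \<Rightarrow> real \<Rightarrow> real" where
  "majorant n j x \<equiv> real (crec n j) * M0 ^ (n div 2) * index_weight M j * \<bar>x - x0\<bar> ^ n"

lemma M0_nonneg: "0 \<le> M0"
  using M0_bound[OF x0_mem] by (meson abs_ge_zero order_trans zero_le_divide_1_iff)

lemma M_nonneg: "i < d \<Longrightarrow> 0 \<le> M i"
  using M_bound[OF _ x0_mem] by (meson abs_ge_zero order_trans)

lemma segment_subset: "x \<in> {x1..x2} \<Longrightarrow> {min x0 x..max x0 x} \<subseteq> {x1..x2}"
  using x0_mem by auto

lemma Xrec_bound_has_neg: "has_neg j \<Longrightarrow> \<bar>X n j x\<bar> \<le> majorant n j x"
  by (simp add: Xrec_crec_has_neg del: Xrec.simps crec.simps)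

lemma Xrec_bound_0:
  assumes "sum_list j = 0"
  shows "\<bar>X 0 j x\<bar> \<le> majorant 0 j x"
proof (cases "has_neg j")
  case False
  then have "\<forall>i<length j. 0 \<le> j ! i" by (auto simp: has_neg_def)
  with assms have zero: "\<forall>i<length j. j ! i = 0"
    by (simp add: sum_list_sum_nth atLeast0LessThan) (subst (asm) sum_nonneg_eq_0_iff; simp)
  then have "j = replicate (length j) 0" by (simp add: list_eq_iff_nth_eq)
  moreover have "index_weight M j = 1"
    using zero by (simp add: index_weight_def)
  ultimately show ?thesis by simp
qed (rule Xrec_bound_has_neg)

lemma Xrec_bound_Suc_odd:
  assumes IH: "\<And>s. s \<in> {x1..x2} \<Longrightarrow> \<bar>X n (dec j k) s\<bar> \<le> majorant n (dec j k) s"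
    and j: "length j = d" "\<not> has_neg j" "admissible j" "k < length j" "odd (j ! k)"
    and "odd (Suc n)" "x \<in> {x1..x2}"
  shows "\<bar>X (Suc n) j x\<bar> \<le> majorant (Suc n) j x"
proof -
  have "0 \<le> j ! k" using j(2,4) by (auto simp: has_neg_def)
  then have weight: "index_weight M j = M k * index_weight M (dec j k)"
    using j(4,5) by (rule index_weight_dec_odd[rotated 2])
  have M_k: "0 \<le> M k" using M_nonneg j(1,4) by simp
  define K where
    "K = M k * (real (crec n (dec j k)) * M0 ^ (n div 2) * index_weight M (dec j k))"
  have "\<bar>X (Suc n) j x\<bar>
      = \<bar>real (Suc n) * oint x0 x (\<lambda>s. r k s * (u0 s)^2 * X n (dec j k) s)\<bar>"
    using assms odd_entry_eq[OF j(3-5)] by (simp del: of_nat_Suc)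
  also have "\<dots> \<le> K * \<bar>x - x0\<bar> ^ Suc n"
  proof (rule abs_scaled_oint_le)
    show "0 \<le> K"
      using M_k M0_nonneg index_weight_nonneg[of "dec j k" M] M_nonneg j(1) by (simp add: K_def)
    fix s assume "s \<in> {min x0 x..max x0 x}"
    with segment_subset assms have s: "s \<in> {x1..x2}" by blast
    have "\<bar>r k s * (u0 s)^2 * X n (dec j k) s\<bar>
        = \<bar>r k s * (u0 s)^2\<bar> * \<bar>X n (dec j k) s\<bar>"
      by (simp only: abs_mult)
    also have "\<dots> \<le> M k * majorant n (dec j k) s"
      using M_bound[of k s] IH[OF s] M_k j(1,4) s by (intro mult_mono) auto
    finally show "\<bar>r k s * (u0 s)^2 * X n (dec j k) s\<bar> \<le> K * \<bar>s - x0\<bar> ^ n"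
      by (simp add: K_def mult.assoc)
  qed
  also have "\<dots> = majorant (Suc n) j x"
    using assms odd_entry_eq[OF j(3-5)] by (simp add: K_def weight)
  finally show ?thesis .
qed

lemma Xrec_bound_Suc_even:
  assumes IH: "\<And>i s. i < length j \<Longrightarrow> s \<in> {x1..x2}
      \<Longrightarrow> \<bar>X n (dec j i) s\<bar> \<le> majorant n (dec j i) s"
    and j: "length j = d" "\<not> has_neg j" "\<And>i. i < length j \<Longrightarrow> even (j ! i)"
    and "even (Suc n)" "x \<in> {x1..x2}"
  shows "\<bar>X (Suc n) j x\<bar> \<le> majorant (Suc n) j x"
proof -
  define C where "C = (\<Sum>i<length j. real (crec n (dec j i)))"
  define K where "K = M0 * (C * M0 ^ (n div 2) * index_weight M j)"
  have "\<bar>X (Suc n) j x\<bar>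
      = \<bar>real (Suc n) * oint x0 x (\<lambda>s. 1 / (p s * (u0 s)^2) * (\<Sum>i<length j. X n (dec j i) s))\<bar>"
    using assms by (simp del: of_nat_Suc)
  also have "\<dots> \<le> K * \<bar>x - x0\<bar> ^ Suc n"
  proof (rule abs_scaled_oint_le)
    show "0 \<le> K"
      using M_nonneg M0_nonneg j(1) by (simp add: K_def C_def index_weight_nonneg sum_nonneg)
    fix s assume "s \<in> {min x0 x..max x0 x}"
    with segment_subset assms have s: "s \<in> {x1..x2}" by blast
    have "\<bar>X n (dec j i) s\<bar>
        \<le> real (crec n (dec j i)) * (M0 ^ (n div 2) * index_weight M j * \<bar>s - x0\<bar> ^ n)"
      if "i < length j" for i
      using IH[OF that s] j(3) that by (simp add: index_weight_dec_even mult.assoc)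
    then have "\<bar>\<Sum>i<length j. X n (dec j i) s\<bar>
        \<le> C * (M0 ^ (n div 2) * index_weight M j * \<bar>s - x0\<bar> ^ n)"
      unfolding C_def sum_distrib_right by (intro order_trans[OF sum_abs] sum_mono) auto
    then have "\<bar>1 / (p s * (u0 s)^2)\<bar> * \<bar>\<Sum>i<length j. X n (dec j i) s\<bar>
        \<le> M0 * (C * (M0 ^ (n div 2) * index_weight M j * \<bar>s - x0\<bar> ^ n))"
      using M0_bound[OF s] M0_nonneg by (intro mult_mono) auto
    then show "\<bar>1 / (p s * (u0 s)^2) * (\<Sum>i<length j. X n (dec j i) s)\<bar>
        \<le> K * \<bar>s - x0\<bar> ^ n"
      by (simp add: K_def abs_mult mult.assoc)
  qed
  also have "\<dots> = majorant (Suc n) j x"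
    using assms by (simp add: K_def C_def)
  finally show ?thesis .
qed

text \<open>Entries of j may be negative: then both X and c vanish, so decrementing a zero entry
  in the even step costs nothing.\<close>

lemma Xrec_bound:
  assumes "length j = d" "admissible j" "sum_list j = int n" "x \<in> {x1..x2}"
  shows "\<bar>X n j x\<bar> \<le> majorant n j x"
  using assms
proof (induction n arbitrary: j x)
  case 0
  then show ?case by (intro Xrec_bound_0) simp
next
  case (Suc n)
  have IH: "\<bar>X n (dec j i) s\<bar> \<le> majorant n (dec j i) s"
    if "i < length j" "admissible (dec j i)" "s \<in> {x1..x2}" for i s
    using Suc.IH[of "dec j i" s] Suc.prems that by (simp add: sum_list_dec)
  consider "has_neg j" | "\<not> has_neg j" "odd (sum_list j)" | "\<not> has_neg j" "even (sum_list j)"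
    by blast
  then show ?case
  proof cases
    case 1
    then show ?thesis by (rule Xrec_bound_has_neg)
  next
    case 2
    then obtain k where k: "k < length j" "odd (j ! k)"
      using admissible_odd_sum_list_iff[OF Suc.prems(2)] by blast
    have "admissible (dec j k)"
      by (rule admissible_dec) (use admissible_odd_unique[OF Suc.prems(2) k] in blast)
    with 2 k Suc.prems show ?thesis
      by (intro Xrec_bound_Suc_odd[OF IH[OF k(1)]]) simp_all
  next
    case 3
    then have even: "even (j ! i)" if "i < length j" for i
      using admissible_odd_sum_list_iff[OF Suc.prems(2)] that by blast
    with 3 Suc.prems show ?thesis
      by (intro Xrec_bound_Suc_even[OF IH[OF _ admissible_dec]]) simp_all
  qed
qed

end

theorem mainTheorem4:
  fixes d :: nat and x0 x1 x2 x :: real and p u0 :: "real \<Rightarrow> real"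
    and r :: "nat \<Rightarrow> real \<Rightarrow> real" and j :: "int list"
  assumes "d \<ge> 1" and "x1 < x2" and "x0 \<in> {x1..x2}"
    and "\<forall>s\<in>{x1..x2}. u0 s \<noteq> 0"
    and "\<forall>s\<in>{x1..x2}. p s \<noteq> 0"
    and "bdd_above ((\<lambda>s. 1 / \<bar>p s * (u0 s)^2\<bar>) ` {x1..x2})"
    and "\<forall>i<d. bdd_above ((\<lambda>s. \<bar>r i s * (u0 s)^2\<bar>) ` {x1..x2})"
    and "length j = d" and "\<forall>i<d. j ! i \<ge> 0" and "admissible j"
    and "x \<in> {x1..x2}"
  shows "\<bar>Xtilde p r u0 x0 j x\<bar> \<le>
    real (ctilde j)
    * (Sup ((\<lambda>s. 1 / \<bar>p s * (u0 s)^2\<bar>) ` {x1..x2})) ^ (nat (sum_list j) div 2)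
    * (\<Prod>i<d. (Sup ((\<lambda>s. \<bar>r i s * (u0 s)^2\<bar>) ` {x1..x2})) ^ nat ((j ! i + 1) div 2))
    * \<bar>x - x0\<bar> ^ nat (sum_list j)"
proof -
  define M0 where "M0 = Sup ((\<lambda>s. 1 / \<bar>p s * (u0 s)^2\<bar>) ` {x1..x2})"
  define M where "M i = Sup ((\<lambda>s. \<bar>r i s * (u0 s)^2\<bar>) ` {x1..x2})" for i
  interpret formal_power_bounds p u0 r x0 x1 x2 d M0 M
    using assms(3,6,7) by unfold_locales (auto simp: M0_def M_def intro: cSup_upper)
  have nonneg: "\<not> has_neg j" and "0 \<le> sum_list j"
    using assms(8,9) by (auto simp: has_neg_def sum_list_sum_nth atLeast0LessThan intro: sum_nonneg)
  then have "\<bar>X (nat (sum_list j)) j x\<bar> \<le> majorant (nat (sum_list j)) j x"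
    using assms(8,10,11) by (intro Xrec_bound) simp_all
  then show ?thesis
    using nonneg assms(8) by (simp add: Xtilde_def ctilde_def index_weight_def M0_def M_def)
qed

end
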